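(* Let $d\in\mathbb{N}$, $\mathfrak{d}\in\{1,\ldots,d-1\}$, let $\mathcal{N}\subseteq\mathbb{R}^d$ be a non-empty $\mathfrak{d}$-dimensional $C^1$-submanifold of $\mathbb{R}^d$, and for every $x_0\in\mathcal{N}$, $R,\delta\in(0,\infty)$ let \[V_{R,\delta}(x_0)=\{x+v\colon x\in\overline{B}_R(x_0)\cap\mathcal{N},\ v\in T_x\mathcal{N}^\perp,\ |v|<\delta\}.\] Then for every $x_0\in\mathcal{N}$ and every projection neighborhood $V_*(x_0)$ of $x_0$ (relative to $\mathcal{N}$) there exist $R_0,\delta_0\in(0,\infty)$ such that for every $R\in(0,R_0]$, $\delta\in(0,\delta_0]$ it holds that $\overline{V_{R,\delta}(x_0)}\subseteq V_*(x_0)$, that \[V_{R,\delta}(x_0)=\{x\in\mathbb{R}^d\colon \operatorname{d}(x,\mathcal{N})=\operatorname{d}(x,\overline{B}_R(x_0)\cap\mathcal{N})<\delta\},\] and that $(x+v)_*=x$ for every $x\in\overline{B}_R(x_0)\cap\mathcal{N}$ and every $v\in T_x\mathcal{N}^\perp$ with $|v|<\delta$.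
   Context: $\overline{B}_R(x_0)$ is the closed Euclidean ball of radius $R$ about $x_0$; $\operatorname{d}(x,\mathcal{A})=\inf_{\vartheta\in\mathcal{A}}|x-\vartheta|$; $T_x\mathcal{N}^\perp$ is the orthogonal complement of the tangent space of $\mathcal{N}$ at $x$. A projection neighborhood $V_*(x_0)$ of $x_0\in\mathcal{N}$ is an open set containing $x_0$ such that for every $x\in V_*(x_0)$ there is a unique $x_*\in\mathcal{N}$ with $|x-x_*|=\operatorname{d}(x,\mathcal{N})$, and the map $x\mapsto x_*$ is continuously differentiable on $V_*(x_0)$. *)

theory Defs
  imports "HOL-Analysis.Analysis"
begin

definition C1_on :: "'a::euclidean_space set \<Rightarrow> ('a \<Rightarrow> 'b::real_normed_vector) \<Rightarrow> bool" where
  "C1_on U f \<longleftrightarrow> (\<exists>f' :: 'a \<Rightarrow> 'a \<Rightarrow>\<^sub>L 'b.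
      (\<forall>x\<in>U. (f has_derivative blinfun_apply (f' x)) (at x)) \<and> continuous_on U f')"

definition C1_submanifold :: "'a::euclidean_space set \<Rightarrow> nat \<Rightarrow> bool" where
  "C1_submanifold N k \<longleftrightarrow>
     (\<forall>p\<in>N. \<exists>U (\<phi>::'a \<Rightarrow> 'a) (\<psi>::'a \<Rightarrow> 'a) L.
        open U \<and> p \<in> U \<and> open (\<phi> ` U) \<and> C1_on U \<phi> \<and> C1_on (\<phi> ` U) \<psi> \<and>
        (\<forall>x\<in>U. \<psi> (\<phi> x) = x) \<and>
        subspace L \<and> dim L = k \<and> \<phi> ` (U \<inter> N) = \<phi> ` U \<inter> L)"

definition tangent_space :: "'a::euclidean_space set \<Rightarrow> 'a \<Rightarrow> 'a set" where
  "tangent_space N x = {v. \<exists>(\<gamma>::real \<Rightarrow> 'a) e. e > 0 \<and> \<gamma> ` {-e<..<e} \<subseteq> N \<and> \<gamma> 0 = x \<and>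
       (\<gamma> has_vector_derivative v) (at 0)}"

definition normal_space :: "'a::euclidean_space set \<Rightarrow> 'a \<Rightarrow> 'a set" where
  "normal_space N x = {v. \<forall>t\<in>tangent_space N x. v \<bullet> t = 0}"

text \<open>The nearest point x_* (meaningful where it exists uniquely).\<close>
definition proj :: "'a::euclidean_space set \<Rightarrow> 'a \<Rightarrow> 'a" where
  "proj N x = (THE y. y \<in> N \<and> dist x y = infdist x N)"

definition projection_nbhd :: "'a::euclidean_space set \<Rightarrow> 'a \<Rightarrow> 'a set \<Rightarrow> bool" where
  "projection_nbhd N x0 V \<longleftrightarrow> open V \<and> x0 \<in> V \<and>
     (\<forall>x\<in>V. \<exists>!y. y \<in> N \<and> dist x y = infdist x N) \<and> C1_on V (proj N)"

definition V_nbhd :: "'a::euclidean_space set \<Rightarrow> 'a \<Rightarrow> real \<Rightarrow> real \<Rightarrow> 'a set" where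
  "V_nbhd N x0 R \<delta> = {x + v | x v. x \<in> cball x0 R \<inter> N \<and> v \<in> normal_space N x \<and> norm v < \<delta>}"

end

theory Submission
  imports Defs
begin

text \<open>Write \<open>P = proj N\<close> and \<open>D = P'(x0)\<close>. Since \<open>P\<close> fixes \<open>N\<close>, \<open>D\<close> is idempotent, so the map
  \<open>y \<mapsto> D (P y) + (I - D) (y - P y)\<close> has derivative \<open>I\<close> at \<open>x0\<close> and, by the inverse function
  theorem, is injective and open near \<open>x0\<close>. For \<open>x \<in> N\<close> near \<open>x0\<close> and a small normal vector \<open>v\<close>,
  the value \<open>D x + (I - D) v\<close> it should take at \<open>x + v\<close> is attained at some \<open>z\<close> near \<open>x0\<close>;
  injectivity forces \<open>P z = x\<close>, and then \<open>z - x - v\<close> is a normal vector fixed by \<open>D\<close>. As \<open>D\<close> is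
  close to \<open>P'(x)\<close>, which maps into the tangent space at \<open>x\<close>, this vector vanishes: \<open>P (x + v) = x\<close>.\<close>

lemma proj_eq_self:
  assumes "y \<in> N"
  shows "proj N y = y"
  unfolding proj_def by (rule the_equality) (use assms in auto)

lemma projection_nbhd_proj:
  assumes "projection_nbhd N x0 V" "y \<in> V"
  shows "proj N y \<in> N" and "dist y (proj N y) = infdist y N"
proof -
  have "\<exists>!p. p \<in> N \<and> dist y p = infdist y N"
    using assms by (auto simp: projection_nbhd_def)
  then have "proj N y \<in> N \<and> dist y (proj N y) = infdist y N"
    unfolding proj_def by (rule theI')
  then show "proj N y \<in> N" "dist y (proj N y) = infdist y N" by auto
qed

lemma projection_nbhd_proj_eqI:
  assumes "projection_nbhd N x0 V" "y \<in> V" "p \<in> N" "dist y p = infdist y N"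
  shows "proj N y = p"
proof -
  have "\<exists>!p. p \<in> N \<and> dist y p = infdist y N"
    using assms by (auto simp: projection_nbhd_def)
  then show ?thesis
    unfolding proj_def using assms(3,4) by (simp add: the1_equality)
qed

lemma closed_inter_if_projection_nbhd:
  assumes pn: "projection_nbhd N x0 V" and "closed C" "C \<subseteq> V"
  shows "closed (C \<inter> N)"
proof -
  have "y \<in> C \<inter> N" if y: "y \<in> closure (C \<inter> N)" for y
  proof -
    have "y \<in> C" using y closure_minimal[OF _ \<open>closed C\<close>, of "C \<inter> N"] by blast
    have "N \<noteq> {}" using y by auto
    moreover have "y \<in> closure N" using y closure_mono[of "C \<inter> N" N] by blast
    ultimately have "infdist y N = 0" by (simp add: in_closure_iff_infdist_zero)
    with projection_nbhd_proj[OF pn] \<open>y \<in> C\<close> \<open>C \<subseteq> V\<close> have "y = proj N y \<and> proj N y \<in> N"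
      by (metis dist_eq_0_iff subsetD)
    with \<open>y \<in> C\<close> show ?thesis by auto
  qed
  then show ?thesis using closure_subset_eq by blast
qed

lemma nearest_point_normal:
  assumes "p \<in> N" "dist y p = infdist y N"
  shows "y - p \<in> normal_space N p"
  unfolding normal_space_def
proof (intro CollectI ballI)
  fix t assume "t \<in> tangent_space N p"
  then obtain \<gamma> e where e: "e > 0" "\<gamma> ` {-e<..<e} \<subseteq> N" "\<gamma> 0 = p"
    and d\<gamma>: "(\<gamma> has_vector_derivative t) (at 0)"
    unfolding tangent_space_def by blast
  define g where "g s = (y - \<gamma> s) \<bullet> (y - \<gamma> s)" for s
  have "DERIV g 0 :> - 2 * ((y - p) \<bullet> t)"
    using d\<gamma> unfolding g_def has_field_derivative_def has_vector_derivative_def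
    by (auto intro!: derivative_eq_intros simp: e(3) inner_commute algebra_simps fun_eq_iff)
  moreover have "g 0 \<le> g s" if "\<bar>0 - s\<bar> < e" for s
  proof -
    have "\<gamma> s \<in> N" using that e(2) by (force simp: abs_less_iff)
    then have "dist y p \<le> dist y (\<gamma> s)" using assms(2) infdist_le by metis
    then show ?thesis
      unfolding g_def e(3) by (simp add: dist_norm power_mono flip: power2_norm_eq_inner)
  qed
  ultimately have "- 2 * ((y - p) \<bullet> t) = 0" using e(1) DERIV_local_min by blast
  then show "(y - p) \<bullet> t = 0" by simp
qed

lemma projection_nbhd_normal:
  assumes "projection_nbhd N x0 V" "y \<in> V"
  shows "y - proj N y \<in> normal_space N (proj N y)"
  using nearest_point_normal projection_nbhd_proj[OF assms] by blast

lemma line_locally_in_open: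
  fixes x w :: "'a::real_normed_vector"
  assumes "open V" "x \<in> V"
  obtains e where "e > 0" "\<And>s. \<bar>s\<bar> < e \<Longrightarrow> x + s *\<^sub>R w \<in> V"
proof -
  have "open ((\<lambda>s::real. x + s *\<^sub>R w) -` V)"
    by (rule continuous_open_vimage[OF assms(1)]) (intro continuous_intros)
  moreover have "0 \<in> (\<lambda>s::real. x + s *\<^sub>R w) -` V" using assms(2) by simp
  ultimately obtain e where "e > 0" "ball 0 e \<subseteq> (\<lambda>s::real. x + s *\<^sub>R w) -` V"
    using open_contains_ball_eq by blast
  then show ?thesis using that by (auto simp: subset_iff)
qed

lemma projection_nbhd_line_curve:
  assumes pn: "projection_nbhd N x0 V" and "x \<in> V"
    and dP: "(proj N has_derivative E) (at x)"
  obtains e where "e > 0" "(\<lambda>s. proj N (x + s *\<^sub>R w)) ` {-e<..<e} \<subseteq> N"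
    "((\<lambda>s. proj N (x + s *\<^sub>R w)) has_vector_derivative E w) (at 0)"
proof -
  obtain e where e: "e > 0" "\<And>s. \<bar>s\<bar> < e \<Longrightarrow> x + s *\<^sub>R w \<in> V"
    using line_locally_in_open pn \<open>x \<in> V\<close> unfolding projection_nbhd_def by metis
  have "(\<lambda>s. proj N (x + s *\<^sub>R w)) ` {-e<..<e} \<subseteq> N"
    using e(2) projection_nbhd_proj(1)[OF pn] by (auto simp: abs_less_iff)
  moreover have "((\<lambda>s::real. x + s *\<^sub>R w) has_vector_derivative w) (at 0)"
    by (auto intro!: derivative_eq_intros)
  then have "((proj N \<circ> (\<lambda>s. x + s *\<^sub>R w)) has_vector_derivative E w) (at 0)"
    by (rule vector_derivative_diff_chain_within) (simp add: dP has_derivative_at_withinI)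
  ultimately show ?thesis using that e(1) by (simp add: o_def)
qed

lemma projection_nbhd_derivative_tangent:
  assumes "projection_nbhd N x0 V" "x \<in> N" "x \<in> V"
    and "(proj N has_derivative E) (at x)"
  shows "E w \<in> tangent_space N x"
proof -
  obtain e where "e > 0" "(\<lambda>s. proj N (x + s *\<^sub>R w)) ` {-e<..<e} \<subseteq> N"
    "((\<lambda>s. proj N (x + s *\<^sub>R w)) has_vector_derivative E w) (at 0)"
    using projection_nbhd_line_curve[OF assms(1,3,4)] .
  then show ?thesis
    unfolding tangent_space_def using proj_eq_self[OF \<open>x \<in> N\<close>] by force
qed

lemma projection_nbhd_derivative_idempotent:
  assumes pn: "projection_nbhd N x0 V" and "x \<in> N" "x \<in> V"
    and dP: "(proj N has_derivative E) (at x)"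
  shows "E (E w) = E w"
proof -
  define \<gamma> where "\<gamma> s = proj N (x + s *\<^sub>R w)" for s
  obtain e where e: "e > 0" "\<gamma> ` {-e<..<e} \<subseteq> N" and d\<gamma>: "(\<gamma> has_vector_derivative E w) (at 0)"
    using projection_nbhd_line_curve[OF pn \<open>x \<in> V\<close> dP] unfolding \<gamma>_def[abs_def] .
  have "\<gamma> 0 = x" using proj_eq_self[OF \<open>x \<in> N\<close>] by (simp add: \<gamma>_def)
  then have "(proj N has_derivative E) (at (\<gamma> 0) within range \<gamma>)"
    using dP by (simp add: has_derivative_at_withinI)
  then have chain: "((proj N \<circ> \<gamma>) has_vector_derivative E (E w)) (at 0)"
    by (rule vector_derivative_diff_chain_within[OF d\<gamma>])
  have proj_\<gamma>: "(proj N \<circ> \<gamma>) s = \<gamma> s" if "s \<in> {-e<..<e}" for s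
    using e(2) that by (simp add: image_subset_iff proj_eq_self)
  have "(\<gamma> has_vector_derivative E (E w)) (at 0)"
    using has_vector_derivative_transform_within_open[OF chain open_greaterThanLessThan _ proj_\<gamma>, of "-e" e] e(1) by simp
  with d\<gamma> show ?thesis using vector_derivative_unique_at by blast
qed

definition normal_coords :: "('a \<Rightarrow> 'a) \<Rightarrow> ('a \<Rightarrow> 'a) \<Rightarrow> 'a \<Rightarrow> 'a::real_vector" where
  "normal_coords P D y = D (P y) + ((y - P y) - D (y - P y))"

lemma normal_coords_apply_idempotent:
  assumes "linear D" "\<And>u. D (D u) = D u"
  shows "D (normal_coords P D y) = D (P y)"
  using assms by (simp add: normal_coords_def linear_add linear_diff)

lemma normal_coords_fixed_point:
  assumes "linear D" "P y = y"
  shows "normal_coords P D y = D y"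
  using assms by (simp add: normal_coords_def linear_0)

lemma normal_coords_has_derivative:
  assumes "(P has_derivative P') (at y)" "bounded_linear D"
  shows "(normal_coords P D has_derivative (\<lambda>h. D (P' h) + ((h - P' h) - D (h - P' h)))) (at y)"
  unfolding normal_coords_def[abs_def]
  using assms by (intro derivative_intros bounded_linear.has_derivative[OF assms(2)])

lemma local_inverse_open_map:
  fixes H :: "'a::euclidean_space \<Rightarrow> 'a" and H' :: "'a \<Rightarrow> 'a \<Rightarrow>\<^sub>L 'a"
  assumes "open S" "x0 \<in> S"
    and "\<And>y. y \<in> S \<Longrightarrow> (H has_derivative blinfun_apply (H' y)) (at y)"
    and "continuous_on S H'" and "invH o\<^sub>L H' x0 = id_blinfun"
  obtains \<rho> where "\<rho> > 0" "ball x0 \<rho> \<subseteq> S" "inj_on H (ball x0 \<rho>)"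
    "\<And>\<sigma>. \<sigma> > 0 \<Longrightarrow> \<exists>\<epsilon>>0. ball (H x0) \<epsilon> \<subseteq> H ` ball x0 \<sigma>"
proof -
  obtain U V g where U: "open U" "U \<subseteq> S" "x0 \<in> U" and "open V" and hom: "homeomorphism U V H g"
    using inverse_function_theorem[OF assms(1,3,4,2,5)] by metis
  obtain \<rho> where \<rho>: "\<rho> > 0" "ball x0 \<rho> \<subseteq> U" using U open_contains_ball by blast
  have "ball x0 \<rho> \<subseteq> S" using \<rho>(2) U(2) by blast
  moreover have "inj_on H (ball x0 \<rho>)"
    using \<rho>(2) homeomorphism_apply1[OF hom] by (metis inj_on_def subsetD)
  moreover have "\<exists>\<epsilon>>0. ball (H x0) \<epsilon> \<subseteq> H ` ball x0 \<sigma>" if "\<sigma> > 0" for \<sigma>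
  proof -
    let ?B = "ball x0 (min \<sigma> \<rho>)"
    have "openin (top_of_set U) ?B" using \<rho>(2) U(1) by (intro open_openin_trans) auto
    then have "open (H ` ?B)"
      using homeomorphism_imp_open_map[OF hom] openin_open_trans \<open>open V\<close> by blast
    moreover have "H x0 \<in> H ` ?B" using that \<rho>(1) by simp
    ultimately obtain \<epsilon> where "\<epsilon> > 0" "ball (H x0) \<epsilon> \<subseteq> H ` ?B"
      using open_contains_ball_eq by blast
    moreover have "H ` ?B \<subseteq> H ` ball x0 \<sigma>" by (intro image_mono) auto
    ultimately show ?thesis by (meson order_trans)
  qed
  ultimately show ?thesis by (rule that[OF \<rho>(1)])
qed

lemma normal_coords_local_inverse:
  fixes P :: "'a::euclidean_space \<Rightarrow> 'a" and P' :: "'a \<Rightarrow> 'a \<Rightarrow>\<^sub>L 'a"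
  assumes "open V" "x0 \<in> V"
    and dP: "\<And>y. y \<in> V \<Longrightarrow> (P has_derivative blinfun_apply (P' y)) (at y)"
    and cP: "continuous_on V P'"
    and idem: "\<And>u. P' x0 (P' x0 u) = P' x0 u"
  obtains \<rho> where "\<rho> > 0" "ball x0 \<rho> \<subseteq> V" "inj_on (normal_coords P (P' x0)) (ball x0 \<rho>)"
    "\<And>\<sigma>. \<sigma> > 0 \<Longrightarrow> \<exists>\<epsilon>>0. ball (normal_coords P (P' x0) x0) \<epsilon> \<subseteq> normal_coords P (P' x0) ` ball x0 \<sigma>"
proof (rule local_inverse_open_map)
  define D where "D = P' x0"
  define H' where "H' y = (D o\<^sub>L P' y) + ((id_blinfun - P' y) - (D o\<^sub>L (id_blinfun - P' y)))" for y
  show "(normal_coords P (P' x0) has_derivative blinfun_apply (H' y)) (at y)" if "y \<in> V" for y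
    unfolding H'_def D_def
    by (rule has_derivative_eq_rhs[OF normal_coords_has_derivative[OF dP[OF that] blinfun.bounded_linear_right]])
      (simp_all add: fun_eq_iff blinfun.bilinear_simps)
  show "continuous_on V H'" unfolding H'_def by (intro continuous_intros cP)
  show "id_blinfun o\<^sub>L H' x0 = id_blinfun"
    by (rule blinfun_eqI) (simp add: H'_def D_def blinfun.bilinear_simps idem)
qed (use assms that in auto)

lemma fixed_vector_orthogonal_eq_0:
  fixes D E :: "'a::real_inner \<Rightarrow>\<^sub>L 'a"
  assumes "D w = w" "w \<bullet> E w = 0" "norm (D - E) < 1"
  shows "w = 0"
proof (rule ccontr)
  assume "w \<noteq> 0"
  have "norm w * norm w = w \<bullet> (D w - E w)"
    using assms(1,2) by (simp add: inner_diff_right dot_square_norm power2_eq_square)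
  also have "\<dots> \<le> norm w * norm ((D - E) w)"
    by (simp add: norm_cauchy_schwarz blinfun.bilinear_simps)
  also have "\<dots> \<le> norm w * (norm (D - E) * norm w)"
    by (simp add: mult_left_mono norm_blinfun)
  also have "\<dots> < norm w * norm w"
    using assms(3) \<open>w \<noteq> 0\<close> by simp
  finally show False by simp
qed

lemma projection_nbhd_dist_proj:
  assumes "projection_nbhd N x0 V" "z \<in> V" "p \<in> N"
  shows "dist p (proj N z) \<le> 2 * dist p z"
proof -
  have "dist z (proj N z) \<le> dist z p"
    using projection_nbhd_proj(2)[OF assms(1,2)] infdist_le[OF assms(3)] by simp
  then show ?thesis using dist_triangle[of p "proj N z" z] by (simp add: dist_commute)
qed

lemma projection_nbhd_proj_add_normal_eq:
  fixes D E :: "'a::euclidean_space \<Rightarrow>\<^sub>L 'a"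
  assumes pn: "projection_nbhd N x0 V" and "x0 \<in> N"
    and idem: "\<And>u. D (D u) = D u"
    and \<rho>: "ball x0 \<rho> \<subseteq> V" "inj_on (normal_coords (proj N) D) (ball x0 \<rho>)"
    and hit: "D x + (v - D v) \<in> normal_coords (proj N) D ` ball x0 (\<rho>/2)"
    and x: "x \<in> N" "x \<in> ball x0 \<rho>"
    and dP: "(proj N has_derivative E) (at x)" and DE: "norm (D - E) < 1"
    and v: "v \<in> normal_space N x"
  shows "proj N (x + v) = x"
proof -
  let ?H = "normal_coords (proj N) D"
  obtain z where z: "z \<in> ball x0 (\<rho>/2)" "?H z = D x + (v - D v)" using hit by force
  have "dist x0 z < \<rho>" using z(1) zero_le_dist[of x0 z] unfolding mem_ball by linarith
  then have "z \<in> V" "x \<in> V" using x(2) \<rho>(1) by auto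
  then have "proj N z \<in> ball x0 \<rho>"
    using projection_nbhd_dist_proj[OF pn _ \<open>x0 \<in> N\<close>, of z] z(1) by simp
  have lin: "linear D" by (rule bounded_linear.linear[OF blinfun.bounded_linear_right])
  have "D (proj N z) = D (D x + (v - D v))"
    using normal_coords_apply_idempotent[OF lin idem] z(2) by metis
  also have "\<dots> = D x" by (simp add: blinfun.bilinear_simps idem)
  finally have "?H (proj N z) = ?H x"
    using projection_nbhd_proj(1)[OF pn \<open>z \<in> V\<close>] x(1)
    by (simp add: normal_coords_fixed_point[OF lin] proj_eq_self)
  then have Pz: "proj N z = x"
    using \<rho>(2) \<open>proj N z \<in> ball x0 \<rho>\<close> x(2) by (simp add: inj_on_eq_iff)
  define w where "w = z - x - v"
  have "D x + ((z - x) - D (z - x)) = D x + (v - D v)"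
    using z(2) by (simp add: normal_coords_def Pz)
  then have "D w = w" by (simp add: w_def blinfun.bilinear_simps algebra_simps)
  moreover have "w \<bullet> E w = 0"
  proof -
    have "z - x \<in> normal_space N x" using projection_nbhd_normal[OF pn \<open>z \<in> V\<close>] Pz by simp
    moreover have "E w \<in> tangent_space N x"
      using projection_nbhd_derivative_tangent[OF pn x(1) \<open>x \<in> V\<close> dP] by blast
    ultimately show ?thesis
      using v unfolding normal_space_def w_def by (simp add: inner_diff_left)
  qed
  ultimately have "w = 0" using fixed_vector_orthogonal_eq_0 DE by blast
  then show ?thesis using Pz by (simp add: w_def algebra_simps)
qed

lemma blinfun_plus_complement_near:
  fixes D :: "'a::real_normed_vector \<Rightarrow>\<^sub>L 'a"
  assumes "\<epsilon> > 0"
  obtains r \<delta> where "r > 0" "\<delta> > 0"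
    "\<And>x v. dist x x0 < r \<Longrightarrow> norm v < \<delta> \<Longrightarrow> dist (D x + (v - D v)) (D x0) < \<epsilon>"
proof -
  have "isCont D x0" by (intro continuous_intros)
  then obtain r where r: "r > 0" "\<And>x. dist x x0 < r \<Longrightarrow> dist (D x) (D x0) < \<epsilon>/2"
    using half_gt_zero[OF assms] unfolding continuous_at_eps_delta by blast
  have "isCont (\<lambda>v. v - D v) 0" by (intro continuous_intros)
  then have "\<exists>\<delta>>0. \<forall>v. dist v 0 < \<delta> \<longrightarrow> dist (v - D v) (0 - D 0) < \<epsilon>/2"
    using half_gt_zero[OF assms] unfolding continuous_at_eps_delta by blast
  then obtain \<delta> where \<delta>: "\<delta> > 0" "\<And>v. norm v < \<delta> \<Longrightarrow> norm (v - D v) < \<epsilon>/2"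
    by (auto simp: blinfun.zero_right)
  have "dist (D x + (v - D v)) (D x0) < \<epsilon>" if "dist x x0 < r" "norm v < \<delta>" for x v
    using r(2)[OF that(1)] \<delta>(2)[OF that(2)] dist_triangle_add_half[of "D x" "D x0" \<epsilon> "v - D v" 0]
    by simp
  then show ?thesis by (rule that[OF r(1) \<delta>(1)])
qed

lemma projection_nbhd_proj_add_normal:
  assumes pn: "projection_nbhd N x0 V" and "x0 \<in> N"
  obtains r \<delta> where "r > 0" "\<delta> > 0" "ball x0 r \<subseteq> V"
    "\<And>x v. x \<in> N \<Longrightarrow> dist x0 x < r \<Longrightarrow> v \<in> normal_space N x \<Longrightarrow> norm v < \<delta> \<Longrightarrow>
      proj N (x + v) = x"
proof -
  have "open V" "x0 \<in> V" using pn by (auto simp: projection_nbhd_def)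
  obtain P' where dP: "\<And>y. y \<in> V \<Longrightarrow> (proj N has_derivative blinfun_apply (P' y)) (at y)"
    and cP: "continuous_on V P'"
    using pn unfolding projection_nbhd_def C1_on_def by blast
  define D where "D = P' x0"
  have idem: "D (D u) = D u" for u
    unfolding D_def by (rule projection_nbhd_derivative_idempotent[OF pn \<open>x0 \<in> N\<close> \<open>x0 \<in> V\<close> dP[OF \<open>x0 \<in> V\<close>]])
  define H where "H = normal_coords (proj N) D"
  obtain \<rho> where \<rho>: "\<rho> > 0" "ball x0 \<rho> \<subseteq> V" "inj_on H (ball x0 \<rho>)"
    and open_map: "\<And>\<sigma>. \<sigma> > 0 \<Longrightarrow> \<exists>\<epsilon>>0. ball (H x0) \<epsilon> \<subseteq> H ` ball x0 \<sigma>"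
    using normal_coords_local_inverse[OF \<open>open V\<close> \<open>x0 \<in> V\<close> dP cP idem[unfolded D_def]]
    unfolding H_def D_def by blast
  obtain \<epsilon> where \<epsilon>: "\<epsilon> > 0" "ball (H x0) \<epsilon> \<subseteq> H ` ball x0 (\<rho>/2)"
    using open_map[of "\<rho>/2"] \<rho>(1) by auto
  obtain \<eta> where \<eta>: "\<eta> > 0" "\<And>x. x \<in> V \<Longrightarrow> dist x x0 < \<eta> \<Longrightarrow> dist (P' x) D < 1"
    using cP \<open>x0 \<in> V\<close> unfolding continuous_on_iff D_def by (meson zero_less_one)
  obtain d \<delta> where d\<delta>: "d > 0" "\<delta> > 0"
    and near: "\<And>x v. dist x x0 < d \<Longrightarrow> norm v < \<delta> \<Longrightarrow> dist (D x + (v - D v)) (D x0) < \<epsilon>"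
    using blinfun_plus_complement_near[OF \<epsilon>(1)] by blast
  have "H x0 = D x0"
    unfolding H_def using bounded_linear.linear[OF blinfun.bounded_linear_right]
    by (rule normal_coords_fixed_point) (rule proj_eq_self[OF \<open>x0 \<in> N\<close>])
  have proj_add: "proj N (x + v) = x"
    if x: "x \<in> N" "dist x0 x < min \<rho> (min \<eta> d)" and v: "v \<in> normal_space N x" "norm v < \<delta>" for x v
  proof -
    have "x \<in> ball x0 \<rho>" "x \<in> V" using x(2) \<rho>(2) by auto
    have "D x + (v - D v) \<in> H ` ball x0 (\<rho>/2)"
      using near[OF _ v(2), of x] x(2) \<open>H x0 = D x0\<close> \<epsilon>(2) by (auto simp: dist_commute)
    moreover have "norm (D - P' x) < 1"
      using \<eta>(2)[OF \<open>x \<in> V\<close>] x(2) by (simp add: dist_norm norm_minus_commute)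
    ultimately show ?thesis
      using projection_nbhd_proj_add_normal_eq[OF pn \<open>x0 \<in> N\<close> idem \<rho>(2) \<rho>(3)[unfolded H_def] _
          x(1) \<open>x \<in> ball x0 \<rho>\<close> dP[OF \<open>x \<in> V\<close>] _ v(1)]
      unfolding H_def by blast
  qed
  have "min \<rho> (min \<eta> d) > 0" using \<rho>(1) \<eta>(1) d\<delta>(1) by simp
  moreover have "ball x0 (min \<rho> (min \<eta> d)) \<subseteq> V" using \<rho>(2) by auto
  ultimately show ?thesis by (rule that[OF _ d\<delta>(2) _ proj_add])
qed

lemma V_nbhd_subset_cball: "V_nbhd N x0 R \<delta> \<subseteq> cball x0 (R + \<delta>)"
proof
  fix y assume "y \<in> V_nbhd N x0 R \<delta>"
  then obtain x v where "y = x + v" "dist x0 x \<le> R" "norm v < \<delta>"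
    unfolding V_nbhd_def by auto
  then show "y \<in> cball x0 (R + \<delta>)"
    using dist_triangle[of x0 y x] by (simp add: dist_norm)
qed

lemma V_nbhd_eq_infdist:
  assumes pn: "projection_nbhd N x0 V" and "x0 \<in> N" "0 \<le> R" "0 < \<delta>"
    and V: "cball x0 (R + \<delta>) \<subseteq> V"
    and proj_add: "\<And>x v. x \<in> cball x0 R \<inter> N \<Longrightarrow> v \<in> normal_space N x \<Longrightarrow> norm v < \<delta> \<Longrightarrow>
      proj N (x + v) = x"
  shows "V_nbhd N x0 R \<delta> = {y. infdist y N = infdist y (cball x0 R \<inter> N) \<and> infdist y N < \<delta>}"
proof -
  let ?C = "cball x0 R \<inter> N"
  have "x0 \<in> ?C" using \<open>x0 \<in> N\<close> \<open>0 \<le> R\<close> by simp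
  then have "?C \<noteq> {}" by blast
  have "cball x0 R \<subseteq> V" using subset_cball[of R "R + \<delta>" x0] V \<open>0 < \<delta>\<close> by simp
  then have "closed ?C" using closed_inter_if_projection_nbhd[OF pn closed_cball] by blast
  have "infdist y N = infdist y ?C \<and> infdist y N < \<delta>" if yV: "y \<in> V_nbhd N x0 R \<delta>" for y
  proof -
    obtain x v where y: "y = x + v" "x \<in> ?C" "v \<in> normal_space N x" "norm v < \<delta>"
      using yV unfolding V_nbhd_def by blast
    have "y \<in> V" using yV V_nbhd_subset_cball V by blast
    then have "infdist y N = norm v"
      using projection_nbhd_proj(2)[OF pn \<open>y \<in> V\<close>] proj_add[OF y(2-4)] by (simp add: y(1) dist_norm)
    moreover have "infdist y ?C \<le> norm v" using infdist_le[OF y(2), of y] y(1) by (simp add: dist_norm)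
    moreover have "infdist y N \<le> infdist y ?C" using \<open>?C \<noteq> {}\<close> by (intro infdist_mono) auto
    ultimately show ?thesis using y(4) by simp
  qed
  moreover have "y \<in> V_nbhd N x0 R \<delta>" if y: "infdist y N = infdist y ?C" "infdist y N < \<delta>" for y
  proof -
    obtain x where x: "x \<in> ?C" "infdist y ?C = dist y x"
      using infdist_attains_inf[OF \<open>closed ?C\<close> \<open>?C \<noteq> {}\<close>] by blast
    have "y \<in> V"
      using V x y dist_triangle[of x0 y x] by (auto simp: dist_commute)
    then have "proj N y = x" using projection_nbhd_proj_eqI[OF pn] x y by auto
    then have "y - x \<in> normal_space N x" using projection_nbhd_normal[OF pn \<open>y \<in> V\<close>] by simp
    moreover have "norm (y - x) < \<delta>" using x y by (simp add: dist_norm)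
    ultimately show ?thesis unfolding V_nbhd_def using x(1) by force
  qed
  ultimately show ?thesis by blast
qed

lemma projection_nbhd_V_nbhd:
  assumes pn: "projection_nbhd N x0 V" and "x0 \<in> N"
  shows "\<exists>R0>0. \<exists>\<delta>0>0. \<forall>R \<delta>. 0 < R \<and> R \<le> R0 \<and> 0 < \<delta> \<and> \<delta> \<le> \<delta>0 \<longrightarrow>
           closure (V_nbhd N x0 R \<delta>) \<subseteq> V \<and>
           V_nbhd N x0 R \<delta> = {y. infdist y N = infdist y (cball x0 R \<inter> N) \<and> infdist y N < \<delta>} \<and>
           (\<forall>x\<in>cball x0 R \<inter> N. \<forall>v\<in>normal_space N x. norm v < \<delta> \<longrightarrow> proj N (x + v) = x)"
proof -
  obtain r \<delta>1 where "r > 0" "\<delta>1 > 0" and V: "ball x0 r \<subseteq> V"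
    and proj_add: "\<And>x v. x \<in> N \<Longrightarrow> dist x0 x < r \<Longrightarrow> v \<in> normal_space N x \<Longrightarrow> norm v < \<delta>1 \<Longrightarrow>
      proj N (x + v) = x"
    by (rule projection_nbhd_proj_add_normal[OF pn \<open>x0 \<in> N\<close>], rule that)
  define R0 where "R0 = r/4"
  define \<delta>0 where "\<delta>0 = min \<delta>1 (r/4)"
  have "R0 > 0" "\<delta>0 > 0" using \<open>r > 0\<close> \<open>\<delta>1 > 0\<close> by (auto simp: R0_def \<delta>0_def)
  have main: "closure (V_nbhd N x0 R \<delta>) \<subseteq> V \<and>
      V_nbhd N x0 R \<delta> = {y. infdist y N = infdist y (cball x0 R \<inter> N) \<and> infdist y N < \<delta>} \<and>
      (\<forall>x\<in>cball x0 R \<inter> N. \<forall>v\<in>normal_space N x. norm v < \<delta> \<longrightarrow> proj N (x + v) = x)"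
    if "0 < R \<and> R \<le> R0 \<and> 0 < \<delta> \<and> \<delta> \<le> \<delta>0" for R \<delta>
  proof -
    have R\<delta>: "0 < R" "R < r" "0 < \<delta>" "\<delta> \<le> \<delta>1" "R + \<delta> < r"
      using that \<open>r > 0\<close> by (auto simp: R0_def \<delta>0_def)
    then have "cball x0 (R + \<delta>) \<subseteq> ball x0 r" by (simp add: cball_subset_ball_iff)
    then have cb: "cball x0 (R + \<delta>) \<subseteq> V" using V by blast
    have proj_add_\<delta>: "proj N (x + v) = x"
      if "x \<in> cball x0 R \<inter> N" "v \<in> normal_space N x" "norm v < \<delta>" for x v
      using proj_add that R\<delta> by auto
    have "closure (V_nbhd N x0 R \<delta>) \<subseteq> V"
      using order_trans[OF closure_minimal[OF V_nbhd_subset_cball closed_cball] cb] .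
    moreover have "V_nbhd N x0 R \<delta> = {y. infdist y N = infdist y (cball x0 R \<inter> N) \<and> infdist y N < \<delta>}"
      using V_nbhd_eq_infdist[OF pn \<open>x0 \<in> N\<close> _ R\<delta>(3) cb proj_add_\<delta>] R\<delta>(1) by simp
    moreover have "\<forall>x\<in>cball x0 R \<inter> N. \<forall>v\<in>normal_space N x. norm v < \<delta> \<longrightarrow> proj N (x + v) = x"
      using proj_add_\<delta> by blast
    ultimately show ?thesis by (intro conjI)
  qed
  show ?thesis
    by (rule exI[of _ R0], rule conjI[OF \<open>R0 > 0\<close>], rule exI[of _ \<delta>0], rule conjI[OF \<open>\<delta>0 > 0\<close>])
      (intro allI impI main)
qed

theorem proposition2p5:
  fixes N :: "'a::euclidean_space set" and k :: nat
  assumes "1 \<le> k" and "k < DIM('a)"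
    and "N \<noteq> {}" and "C1_submanifold N k"
  shows "\<forall>x0\<in>N. \<forall>Vs. projection_nbhd N x0 Vs \<longrightarrow>
           (\<exists>R0>0. \<exists>\<delta>0>0. \<forall>R \<delta>. 0 < R \<and> R \<le> R0 \<and> 0 < \<delta> \<and> \<delta> \<le> \<delta>0 \<longrightarrow>
              closure (V_nbhd N x0 R \<delta>) \<subseteq> Vs \<and>
              V_nbhd N x0 R \<delta> = {x. infdist x N = infdist x (cball x0 R \<inter> N) \<and> infdist x N < \<delta>} \<and>
              (\<forall>x\<in>cball x0 R \<inter> N. \<forall>v\<in>normal_space N x. norm v < \<delta> \<longrightarrow> proj N (x + v) = x))"
  by (intro ballI allI impI projection_nbhd_V_nbhd)

end
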